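(* For all positive integers $k,t$, with $\mathcal{S}$ the support partition of $\mathbb{F}_q^k$, $$\frac{2^k q}{4^k(q-1)-a(q-a)}\sum_{s=1}^{\min(k,2t)}(2t+1-s)\binom{k}{s}\;\le\; r_{\mathcal{S}}(k,t)\;\le\; N_q(2^k,2t),$$ where $a=2^k\bmod q$.
   Context: $\mathcal{S}=\{S_A:A\subseteq[k]\}$ with $S_A=\{u\in\mathbb{F}_q^k:\mathrm{supp}(u)=A\}$, $\mathrm{supp}(u)=\{i:u_i\ne0\}$. A $(\mathcal{P},t)$-encoding with redundancy $r$ is a systematic map $\mathcal{C}:\mathbb{F}_q^k\to\mathbb{F}_q^{k+r}$, $\mathcal{C}(u)=(u,p(u))$, with Hamming distance $d(\mathcal{C}(u),\mathcal{C}(v))\ge 2t+1$ whenever $u,v$ lie in different blocks of $\mathcal{P}$; $r_{\mathcal{P}}(k,t)$ is the minimum such $r$. $N_q(M,d)$ denotes the minimum length of a $q$-ary code with $M$ codewords and minimum Hamming distance $d$. *)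

theory Defs
  imports Complex_Main
begin

text \<open>Vectors of length n over the alphabet/field 'a are lists of length n (0-based coordinates).\<close>

definition vecs :: "nat \<Rightarrow> 'a list set" where
  "vecs n = {xs. length xs = n}"

definition hdist :: "'a list \<Rightarrow> 'a list \<Rightarrow> nat" where
  "hdist xs ys = card {i. i < length xs \<and> xs ! i \<noteq> ys ! i}"

definition supp :: "'a::zero list \<Rightarrow> nat set" where
  "supp u = {i. i < length u \<and> u ! i \<noteq> 0}"

definition support_partition :: "nat \<Rightarrow> 'a::zero list set set" where
  "support_partition k = {{u \<in> vecs k. supp u = A} | A. A \<subseteq> {0..<k}}"

text \<open>p gives a systematic (P,t)-encoding C(u) = (u, p(u)) with redundancy r.\<close>
definition is_encoding :: "'a list set set \<Rightarrow> nat \<Rightarrow> nat \<Rightarrow> nat \<Rightarrow> ('a list \<Rightarrow> 'a list) \<Rightarrow> bool" where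
  "is_encoding P k t r p \<longleftrightarrow>
     (\<forall>u \<in> vecs k. length (p u) = r) \<and>
     (\<forall>u \<in> vecs k. \<forall>v \<in> vecs k. (\<not> (\<exists>B \<in> P. u \<in> B \<and> v \<in> B)) \<longrightarrow>
         hdist (u @ p u) (v @ p v) \<ge> 2 * t + 1)"

definition min_redundancy :: "'a list set set \<Rightarrow> nat \<Rightarrow> nat \<Rightarrow> nat" where
  "min_redundancy P k t = (LEAST r. \<exists>p. is_encoding P k t r p)"

text \<open>N_q(M,d): minimum length of a code over alphabet 'a (q = CARD('a)) with M codewords
  and minimum Hamming distance d.\<close>
definition min_code_length :: "'a itself \<Rightarrow> nat \<Rightarrow> nat \<Rightarrow> nat" where
  "min_code_length _ M d = (LEAST n. \<exists>C :: 'a list set. C \<subseteq> vecs n \<and> card C = M \<and>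
      (\<forall>x \<in> C. \<forall>y \<in> C. x \<noteq> y \<longrightarrow> hdist x y \<ge> d))"

end

theory Submission
  imports Defs
begin

text \<open>Restricted to the \<open>2^k\<close> indicator vectors \<open>1\<^sub>A\<close>, one in each block of the support
  partition, an encoding must give \<open>p(1\<^sub>A)\<close> and \<open>p(1\<^sub>B)\<close> distance at least
  \<open>2t + 1 - |A \<triangle> B|\<close>. Summed over all ordered pairs \<open>(A, B)\<close> this is
  \<open>2^k \<Sum>\<^sub>s (k choose s)(2t + 1 - s)\<close>. On the other hand, as in Plotkin's bound, each
  coordinate of the redundancy separates at most \<open>(4^k (q - 1) - a (q - a)) / q\<close> pairs, because the
  number of pairs it does not separate is the sum of the squared fibre sizes, which is smallest
  for the most balanced distribution of \<open>2^k\<close> words over \<open>q\<close> symbols.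
  Conversely, sending each support bijectively to a codeword of a code with \<open>2^k\<close> words and
  minimum distance \<open>2t\<close> yields an encoding, and repeating every bit of the indicator vectors
  \<open>2t\<close> times shows that such codes exist.\<close>

lemma hdist_conv_sum: "hdist xs ys = (\<Sum>i<length xs. of_bool (xs ! i \<noteq> ys ! i))"
  unfolding hdist_def by (simp add: Int_def lessThan_def)

lemma hdist_append:
  assumes "length xs = length ys"
  shows "hdist (xs @ xs') (ys @ ys') = hdist xs ys + hdist xs' ys'"
proof -
  let ?n = "length xs" and ?m = "length xs'"
  let ?d = "\<lambda>i. of_bool ((xs @ xs') ! i \<noteq> (ys @ ys') ! i) :: nat"
  have "hdist (xs @ xs') (ys @ ys') = sum ?d {0..<?n + ?m}"
    by (simp only: hdist_conv_sum length_append atLeast0LessThan)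
  also have "\<dots> = sum ?d {0..<?n} + sum ?d {?n..<?n + ?m}"
    by (rule sum.atLeastLessThan_concat[symmetric]) simp_all
  also have "sum ?d {?n..<?n + ?m} = sum (\<lambda>i. ?d (i + ?n)) {0..<?m}"
    using sum.shift_bounds_nat_ivl[of ?d 0 ?n ?m] by (simp add: add.commute)
  finally show ?thesis
    using assms by (simp add: hdist_conv_sum nth_append atLeast0LessThan)
qed

lemma hdist_pos:
  assumes "length xs = length ys" "xs \<noteq> ys"
  shows "hdist xs ys > 0"
proof -
  obtain i where "i < length xs" "xs ! i \<noteq> ys ! i"
    using assms nth_equalityI by blast
  then show ?thesis
    unfolding hdist_def by (auto simp: card_gt_0_iff)
qed

lemma sum_squares_ge_balanced:
  fixes n :: "'b \<Rightarrow> nat"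
  assumes "finite X"
  defines "M \<equiv> sum n X" and "q \<equiv> card X"
  shows "real M ^ 2 + real (M mod q) * (real q - real (M mod q))
           \<le> real q * (\<Sum>x\<in>X. real (n x) ^ 2)"
proof -
  define m where "m = M div q"
  define a where "a = M mod q"
  have M_eq: "real M = real q * real m + real a"
    unfolding m_def a_def by (metis of_nat_add of_nat_mult mult_div_mod_eq)
  have "real (n x) ^ 2 \<ge> (2 * real m + 1) * real (n x) - real m * (real m + 1)" for x
  proof -
    have "(real (n x) - real m) * (real (n x) - real m - 1) \<ge> 0"
      by (cases "n x \<le> m") (auto intro: mult_nonpos_nonpos mult_nonneg_nonneg)
    then show ?thesis
      by (simp add: power2_eq_square algebra_simps)
  qed
  then have "(\<Sum>x\<in>X. (2 * real m + 1) * real (n x) - real m * (real m + 1))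
      \<le> (\<Sum>x\<in>X. real (n x) ^ 2)"
    by (intro sum_mono)
  moreover have "(\<Sum>x\<in>X. (2 * real m + 1) * real (n x) - real m * (real m + 1))
      = (2 * real m + 1) * real M - real q * real m * (real m + 1)"
    by (simp add: M_def q_def sum_subtractf sum_distrib_left[symmetric])
  ultimately have "real q * ((2 * real m + 1) * real M - real q * real m * (real m + 1))
      \<le> real q * (\<Sum>x\<in>X. real (n x) ^ 2)"
    by (intro mult_left_mono) auto
  moreover have "real q * ((2 * real m + 1) * real M - real q * real m * (real m + 1))
      = real M ^ 2 + real a * (real q - real a)"
    unfolding M_eq by algebra
  ultimately show ?thesis
    unfolding a_def by simp
qed

lemma sum_pairs_neq_le:
  fixes f :: "'b \<Rightarrow> 'a::finite"
  assumes "finite P"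
  defines "q \<equiv> card (UNIV :: 'a set)" and "a \<equiv> card P mod card (UNIV :: 'a set)"
  shows "real q * (\<Sum>A\<in>P. \<Sum>B\<in>P. of_bool (f A \<noteq> f B))
           \<le> real (card P) ^ 2 * (real q - 1) - real a * (real q - real a)"
proof -
  define n where "n x = card {A \<in> P. f A = x}" for x
  have fibres: "(\<Sum>B\<in>P. of_bool (f A \<noteq> f B)) = real (card P) - real (n (f A))" for A
  proof -
    have "of_bool (f A \<noteq> f B) + of_bool (f B = f A) = (1::real)" for B
      by auto
    then have "(\<Sum>B\<in>P. of_bool (f A \<noteq> f B) + of_bool (f B = f A)) = real (card P)"
      by simp
    moreover have "(\<Sum>B\<in>P. of_bool (f B = f A)) = real (n (f A))"
      using assms(1) by (simp add: sum_of_bool_eq n_def Int_def conj_commute)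
    ultimately show ?thesis
      unfolding sum.distrib by linarith
  qed
  have "card P = sum n UNIV"
    using assms(1) sum.group[of P UNIV f "\<lambda>_. 1::nat"] by (simp add: n_def)
  moreover have "(\<Sum>A\<in>P. real (n (f A))) = (\<Sum>x\<in>UNIV. real (n x) ^ 2)"
  proof -
    have "(\<Sum>A\<in>P. real (n (f A))) = (\<Sum>x\<in>UNIV. \<Sum>A\<in>{A\<in>P. f A = x}. real (n (f A)))"
      using assms(1) sum.group[of P UNIV f "\<lambda>A. real (n (f A))"] by simp
    also have "\<dots> = (\<Sum>x\<in>UNIV. real (n x) ^ 2)"
      by (simp add: n_def power2_eq_square)
    finally show ?thesis .
  qed
  ultimately have "real (card P) ^ 2 + real a * (real q - real a) \<le> real q * (\<Sum>A\<in>P. real (n (f A)))"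
    using sum_squares_ge_balanced[of UNIV n] unfolding q_def a_def by simp
  moreover have "(\<Sum>A\<in>P. \<Sum>B\<in>P. of_bool (f A \<noteq> f B))
      = real (card P) ^ 2 - (\<Sum>A\<in>P. real (n (f A)))"
    by (simp add: fibres sum_subtractf power2_eq_square)
  ultimately show ?thesis
    by (simp add: right_diff_distrib)
qed

lemma plotkin_sum_hdist_le:
  fixes w :: "'b \<Rightarrow> 'a::finite list"
  assumes "finite P" and len: "\<And>A. A \<in> P \<Longrightarrow> length (w A) = r"
  defines "q \<equiv> card (UNIV :: 'a set)" and "a \<equiv> card P mod card (UNIV :: 'a set)"
  shows "real q * (\<Sum>A\<in>P. \<Sum>B\<in>P. real (hdist (w A) (w B)))
           \<le> real r * (real (card P) ^ 2 * (real q - 1) - real a * (real q - real a))"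
proof -
  have "(\<Sum>A\<in>P. \<Sum>B\<in>P. real (hdist (w A) (w B)))
      = (\<Sum>A\<in>P. \<Sum>B\<in>P. \<Sum>j<r. of_bool (w A ! j \<noteq> w B ! j))"
    by (intro sum.cong refl) (simp add: hdist_conv_sum len)
  also have "\<dots> = (\<Sum>A\<in>P. \<Sum>j<r. \<Sum>B\<in>P. of_bool (w A ! j \<noteq> w B ! j))"
    by (intro sum.cong refl sum.swap)
  also have "\<dots> = (\<Sum>j<r. \<Sum>A\<in>P. \<Sum>B\<in>P. of_bool (w A ! j \<noteq> w B ! j))"
    by (rule sum.swap)
  finally have "real q * (\<Sum>A\<in>P. \<Sum>B\<in>P. real (hdist (w A) (w B)))
      = (\<Sum>j<r. real q * (\<Sum>A\<in>P. \<Sum>B\<in>P. of_bool (w A ! j \<noteq> w B ! j)))"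
    by (simp add: sum_distrib_left)
  also have "\<dots> \<le> (\<Sum>j<r. real (card P) ^ 2 * (real q - 1) - real a * (real q - real a))"
    unfolding q_def a_def by (intro sum_mono sum_pairs_neq_le assms(1))
  finally show ?thesis
    by simp
qed

lemma sum_Pow_card:
  fixes g :: "nat \<Rightarrow> 'b::comm_semiring_1"
  assumes "finite K"
  shows "(\<Sum>C\<in>Pow K. g (card C)) = (\<Sum>s=0..card K. of_nat (card K choose s) * g s)"
proof -
  have "card ` Pow K \<subseteq> {0..card K}"
    using assms by (auto intro: card_mono)
  then have "(\<Sum>C\<in>Pow K. g (card C))
      = (\<Sum>s=0..card K. of_nat (card {C \<in> Pow K. card C = s}) * g s)"
    using assms by (intro sum_fun_comp) auto
  also have "\<dots> = (\<Sum>s=0..card K. of_nat (card K choose s) * g s)"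
    using assms by (simp add: n_subsets[symmetric] Pow_def conj_commute)
  finally show ?thesis .
qed

lemma sum_Pow_pairs_card_sym_diff:
  fixes g :: "nat \<Rightarrow> 'b::comm_semiring_1"
  assumes "finite K"
  shows "(\<Sum>A\<in>Pow K. \<Sum>B\<in>Pow K. g (card (sym_diff A B)))
           = 2 ^ card K * (\<Sum>s=0..card K. of_nat (card K choose s) * g s)"
proof -
  have "(\<Sum>B\<in>Pow K. g (card (sym_diff A B))) = (\<Sum>C\<in>Pow K. g (card C))"
    if "A \<in> Pow K" for A
    using that
    by (intro sum.reindex_bij_witness[where i="sym_diff A" and j="sym_diff A"]) auto
  then show ?thesis
    using assms by (simp add: sum_Pow_card card_Pow)
qed

definition indicator_vec :: "nat \<Rightarrow> nat set \<Rightarrow> 'a::zero_neq_one list" where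
  "indicator_vec k A = map (\<lambda>i. of_bool (i \<in> A)) [0..<k]"

lemma length_indicator_vec [simp]: "length (indicator_vec k A) = k"
  by (simp add: indicator_vec_def)

lemma indicator_vec_in_vecs: "indicator_vec k A \<in> vecs k"
  by (simp add: vecs_def)

lemma supp_indicator_vec: "A \<subseteq> {0..<k} \<Longrightarrow> supp (indicator_vec k A) = A"
  unfolding supp_def indicator_vec_def by auto

lemma hdist_indicator_vec:
  "hdist (indicator_vec k A :: 'a::zero_neq_one list) (indicator_vec k B)
     = card ({0..<k} \<inter> sym_diff A B)"
  unfolding hdist_def indicator_vec_def by (rule arg_cong[where f=card]) auto

lemma supp_subset_vecs: "u \<in> vecs k \<Longrightarrow> supp u \<subseteq> {0..<k}"
  by (auto simp: supp_def vecs_def)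

lemma same_block_support_partition_iff:
  assumes "u \<in> vecs k" "v \<in> vecs k"
  shows "(\<exists>B \<in> support_partition k. u \<in> B \<and> v \<in> B) \<longleftrightarrow> supp u = supp v"
proof
  assume "\<exists>B \<in> support_partition k. u \<in> B \<and> v \<in> B"
  then show "supp u = supp v"
    unfolding support_partition_def by auto
next
  assume "supp u = supp v"
  define X :: "'a list set" where "X = {w \<in> vecs k. supp w = supp u}"
  have "X \<in> support_partition k"
    using supp_subset_vecs[OF assms(1)] unfolding support_partition_def X_def by auto
  moreover have "u \<in> X" "v \<in> X"
    using assms \<open>supp u = supp v\<close> by (simp_all add: X_def)
  ultimately show "\<exists>B \<in> support_partition k. u \<in> B \<and> v \<in> B"
    by blast
qed

lemma support_encoding_hdist_indicator_vec:
  fixes p :: "'a::zero_neq_one list \<Rightarrow> 'a list"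
  assumes enc: "is_encoding (support_partition k) k t r p"
    and "A \<subseteq> {0..<k}" "B \<subseteq> {0..<k}" "A \<noteq> B"
  shows "2 * t + 1 \<le> card (sym_diff A B) + hdist (p (indicator_vec k A)) (p (indicator_vec k B))"
proof -
  let ?a = "indicator_vec k A :: 'a list" and ?b = "indicator_vec k B :: 'a list"
  have "\<not> (\<exists>X \<in> support_partition k. ?a \<in> X \<and> ?b \<in> X)"
    using assms(2-4)
    by (simp add: same_block_support_partition_iff indicator_vec_in_vecs supp_indicator_vec)
  then have "2 * t + 1 \<le> hdist (?a @ p ?a) (?b @ p ?b)"
    using enc indicator_vec_in_vecs unfolding is_encoding_def by blast
  also have "\<dots> = card ({0..<k} \<inter> sym_diff A B) + hdist (p ?a) (p ?b)"
    by (simp add: hdist_append hdist_indicator_vec)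
  also have "{0..<k} \<inter> sym_diff A B = sym_diff A B"
    using assms(2,3) by auto
  finally show ?thesis .
qed

lemma support_encoding_redundancy_lower_bound:
  fixes p :: "'a::{finite,zero_neq_one} list \<Rightarrow> 'a list"
  assumes enc: "is_encoding (support_partition k) k t r p"
  defines "q \<equiv> card (UNIV :: 'a set)" and "a \<equiv> 2 ^ k mod card (UNIV :: 'a set)"
  shows "real q * (2 ^ k * (\<Sum>s = 1..min k (2 * t). real (2 * t + 1 - s) * real (k choose s)))
           \<le> real r * (4 ^ k * (real q - 1) - real a * (real q - real a))"
proof -
  define K where "K = {0..<k}"
  define w where "w A = p (indicator_vec k A)" for A
  \<comment> \<open>\<open>g 0 = 0\<close> because the diagonal pairs \<open>A = B\<close> are unconstrained; the truncated
    subtraction makes \<open>g s\<close> vanish for \<open>s > 2t\<close>.\<close>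
  define g where "g s = (if s = 0 then 0 else real (2 * t + 1 - s))" for s
  have len: "length (w A) = r" for A
    using enc indicator_vec_in_vecs unfolding is_encoding_def w_def by blast
  have pair: "g (card (sym_diff A B)) \<le> real (hdist (w A) (w B))"
    if "A \<in> Pow K" "B \<in> Pow K" for A B
    using that support_encoding_hdist_indicator_vec[OF enc, of A B]
    by (cases "A = B") (auto simp: g_def w_def K_def)
  have "(\<Sum>s=0..k. real (k choose s) * g s)
      = (\<Sum>s = 1..min k (2 * t). real (2 * t + 1 - s) * real (k choose s))"
  proof -
    have "(\<Sum>s=0..k. real (k choose s) * g s) = (\<Sum>s=1..min k (2 * t). real (k choose s) * g s)"
      by (intro sum.mono_neutral_right) (auto simp: g_def)
    then show ?thesis
      by (simp add: g_def mult.commute)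
  qed
  then have "2 ^ k * (\<Sum>s = 1..min k (2 * t). real (2 * t + 1 - s) * real (k choose s))
      = (\<Sum>A\<in>Pow K. \<Sum>B\<in>Pow K. g (card (sym_diff A B)))"
    using sum_Pow_pairs_card_sym_diff[of K g] by (simp add: K_def)
  also have "\<dots> \<le> (\<Sum>A\<in>Pow K. \<Sum>B\<in>Pow K. real (hdist (w A) (w B)))"
    by (intro sum_mono pair)
  finally have "real q * (2 ^ k * (\<Sum>s = 1..min k (2 * t). real (2 * t + 1 - s) * real (k choose s)))
      \<le> real q * (\<Sum>A\<in>Pow K. \<Sum>B\<in>Pow K. real (hdist (w A) (w B)))"
    by (intro mult_left_mono) auto
  also have "\<dots> \<le> real r * (real (card (Pow K)) ^ 2 * (real q - 1) - real a * (real q - real a))"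
    using plotkin_sum_hdist_le[of "Pow K" w r] len unfolding q_def a_def by (simp add: K_def card_Pow)
  also have "real (card (Pow K)) ^ 2 = (4::real) ^ k"
    by (simp add: K_def card_Pow power2_eq_square flip: power_mult_distrib)
  finally show ?thesis .
qed

lemma repetition_code_exists:
  assumes "T > 0"
  shows "\<exists>C :: 'a::zero_neq_one list set. C \<subseteq> vecs (T * k) \<and> card C = 2 ^ k \<and>
           (\<forall>x \<in> C. \<forall>y \<in> C. x \<noteq> y \<longrightarrow> T \<le> hdist x y)"
proof -
  define rep :: "nat set \<Rightarrow> 'a list" where
    "rep A = indicator_vec (T * k) ((\<lambda>j. j div T) -` A)" for A
  have dist: "T \<le> hdist (rep A) (rep B)"
    if AB: "A \<subseteq> {0..<k}" "B \<subseteq> {0..<k}" "A \<noteq> B" for A B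
  proof -
    obtain i where i: "i \<in> sym_diff A B"
      using AB(3) by blast
    have "{i * T..<i * T + T} \<subseteq> {0..<T * k} \<inter> sym_diff ((\<lambda>j. j div T) -` A) ((\<lambda>j. j div T) -` B)"
      (is "_ \<subseteq> ?S")
    proof
      fix j assume j: "j \<in> {i * T..<i * T + T}"
      then have "j div T = i"
        by (intro div_nat_eqI) (simp_all add: algebra_simps)
      moreover have "i < k"
        using i AB(1,2) by auto
      then have "i * T + T \<le> T * k"
        using mult_le_mono2[of "Suc i" k T] by (simp add: algebra_simps)
      ultimately show "j \<in> ?S"
        using i j by auto
    qed
    then have "card {i * T..<i * T + T} \<le> hdist (rep A) (rep B)"
      unfolding rep_def hdist_indicator_vec by (intro card_mono) auto
    then show ?thesis
      by simp
  qed
  have "inj_on rep (Pow {0..<k})"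
  proof (rule inj_onI)
    fix A B assume "A \<in> Pow {0..<k}" "B \<in> Pow {0..<k}" "rep A = rep B"
    then show "A = B"
      using dist[of A B] assms by (auto simp: hdist_def)
  qed
  then have "card (rep ` Pow {0..<k}) = 2 ^ k"
    by (simp add: card_image card_Pow)
  moreover have "rep ` Pow {0..<k} \<subseteq> vecs (T * k)"
    by (auto simp: rep_def indicator_vec_in_vecs)
  moreover have "\<forall>x \<in> rep ` Pow {0..<k}. \<forall>y \<in> rep ` Pow {0..<k}. x \<noteq> y \<longrightarrow> T \<le> hdist x y"
    using dist by blast
  ultimately show ?thesis
    by blast
qed

lemma support_encoding_of_code:
  fixes C :: "'a::zero list set"
  assumes code: "C \<subseteq> vecs n" and card: "card C = 2 ^ k"
    and dist: "\<forall>x \<in> C. \<forall>y \<in> C. x \<noteq> y \<longrightarrow> 2 * t \<le> hdist x y"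
  shows "\<exists>p. is_encoding (support_partition k :: 'a list set set) k t n p"
proof -
  have "finite C"
    using card by (metis card.infinite power_not_zero zero_neq_numeral)
  moreover have "card (Pow {0..<k}) = card C"
    using card by (simp add: card_Pow)
  ultimately obtain h where h: "bij_betw h (Pow {0..<k}) C"
    using finite_same_card_bij[of "Pow {0..<k}" C] by auto
  define p where "p u = h (supp u)" for u :: "'a list"
  have p_in_C: "p u \<in> C" if "u \<in> vecs k" for u
    unfolding p_def using bij_betw_apply[OF h] supp_subset_vecs[OF that] by blast
  have "is_encoding (support_partition k) k t n p"
    unfolding is_encoding_def
  proof (intro conjI ballI impI)
    fix u :: "'a list" assume "u \<in> vecs k"
    then show "length (p u) = n"
      using p_in_C code by (auto simp: vecs_def)
  next
    fix u v :: "'a list" assume u: "u \<in> vecs k" and v: "v \<in> vecs k"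
      and "\<not> (\<exists>B \<in> support_partition k. u \<in> B \<and> v \<in> B)"
    then have supp_neq: "supp u \<noteq> supp v"
      by (simp add: same_block_support_partition_iff)
    then have "0 < hdist u v"
      using u v by (intro hdist_pos) (auto simp: vecs_def)
    moreover have "p u \<noteq> p v"
      unfolding p_def using bij_betw_imp_inj_on[OF h] supp_neq supp_subset_vecs u v
      by (metis PowI inj_on_contraD)
    then have "2 * t \<le> hdist (p u) (p v)"
      using dist p_in_C u v by blast
    moreover have "hdist (u @ p u) (v @ p v) = hdist u v + hdist (p u) (p v)"
      using u v by (intro hdist_append) (simp add: vecs_def)
    ultimately show "2 * t + 1 \<le> hdist (u @ p u) (v @ p v)"
      by simp
  qed
  then show ?thesis
    by blast
qed

lemma support_encoding_exists:
  assumes "t > 0"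
  shows "\<exists>r p. is_encoding (support_partition k :: 'a::zero_neq_one list set set) k t r p"
  using repetition_code_exists[of "2 * t" k] assms support_encoding_of_code by fastforce

lemma min_redundancy_support_partition_attained:
  assumes "t > 0"
  shows "\<exists>p. is_encoding (support_partition k :: 'a::zero_neq_one list set set) k t
               (min_redundancy (support_partition k :: 'a list set set) k t) p"
  unfolding min_redundancy_def using support_encoding_exists[OF assms] by (rule LeastI_ex)

lemma min_redundancy_support_partition_le_min_code_length:
  assumes "t > 0"
  shows "min_redundancy (support_partition k :: 'a::zero_neq_one list set set) k t
           \<le> min_code_length TYPE('a) (2 ^ k) (2 * t)"
proof -
  let ?is_code = "\<lambda>n. \<exists>C :: 'a list set. C \<subseteq> vecs n \<and> card C = 2 ^ k \<and>
                        (\<forall>x \<in> C. \<forall>y \<in> C. x \<noteq> y \<longrightarrow> 2 * t \<le> hdist x y)"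
  have "?is_code (2 * t * k)"
    using repetition_code_exists[of "2 * t" k] assms by simp
  then have "?is_code (LEAST n. ?is_code n)"
    by (rule LeastI)
  then have "\<exists>p. is_encoding (support_partition k :: 'a list set set) k t (LEAST n. ?is_code n) p"
    using support_encoding_of_code by blast
  then show ?thesis
    unfolding min_redundancy_def min_code_length_def by (rule Least_le)
qed

lemma two_le_card_UNIV: "2 \<le> card (UNIV :: 'a::{finite,zero_neq_one} set)"
  using card_mono[of UNIV "{0 :: 'a, 1}"] by simp

lemma mod_mult_diff_less_square:
  fixes M q :: nat
  assumes "2 \<le> M" and "2 \<le> q"
  shows "real (M mod q) * (real q - real (M mod q)) < real M ^ 2 * (real q - 1)"
proof -
  define a where "a = M mod q"
  have "real a * (real q - real a) \<le> real a * (real q - 1)"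
    by (cases "a = 0") (auto intro: mult_left_mono)
  also have "\<dots> \<le> real M * (real q - 1)"
    using assms(2) by (intro mult_right_mono) (auto simp: a_def)
  also have "\<dots> < real M ^ 2 * (real q - 1)"
    using assms by (intro mult_strict_right_mono) (auto simp: power2_eq_square)
  finally show ?thesis
    unfolding a_def .
qed

theorem corollary7:
  fixes k t :: nat
  assumes "k > 0" and "t > 0"
  defines "q \<equiv> card (UNIV :: ('a::{finite,field}) set)"
  defines "a \<equiv> (2::nat) ^ k mod q"
  shows "(2 ^ k * real q) / (4 ^ k * (real q - 1) - real a * (real q - real a))
           * (\<Sum>s = 1..min k (2 * t). real (2 * t + 1 - s) * real (k choose s))
         \<le> real (min_redundancy (support_partition k :: 'a list set set) k t)
       \<and> min_redundancy (support_partition k :: 'a list set set) k t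
         \<le> min_code_length TYPE('a) (2 ^ k) (2 * t)"
proof
  let ?r = "min_redundancy (support_partition k :: 'a list set set) k t"
  let ?S = "\<Sum>s = 1..min k (2 * t). real (2 * t + 1 - s) * real (k choose s)"
  let ?D = "4 ^ k * (real q - 1) - real a * (real q - real a)"
  obtain p where "is_encoding (support_partition k :: 'a list set set) k t ?r p"
    using min_redundancy_support_partition_attained[OF assms(2)] by blast
  then have "real q * (2 ^ k * ?S) \<le> real ?r * ?D"
    unfolding q_def a_def by (rule support_encoding_redundancy_lower_bound)
  moreover have "0 < ?D"
  proof -
    have "(2::nat) \<le> 2 ^ k"
      using assms(1) self_le_power[of 2 k] by simp
    then show ?thesis
      using mod_mult_diff_less_square[of "2 ^ k" q] two_le_card_UNIV[where 'a='a]
      unfolding q_def a_def by (simp add: power2_eq_square flip: power_mult_distrib)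
  qed
  ultimately show "(2 ^ k * real q) / ?D * ?S \<le> real ?r"
    by (simp add: pos_divide_le_eq mult_ac)
  show "?r \<le> min_code_length TYPE('a) (2 ^ k) (2 * t)"
    using min_redundancy_support_partition_le_min_code_length[OF assms(2)] .
qed

end
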